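(* Let $\mathcal{I}\in\mathrm{Ins}(\Omega,\mathcal{H},\mathcal{K})$ and $\mathcal{J}\in\mathrm{Ins}(\Lambda,\mathcal{H},\mathcal{V})$ be instruments. If $\mathcal{I}\preceq\mathcal{J}$, then $\mathcal{I}$ is compatible with $\mathsf{A}^{\mathcal{J}}$; in particular $\Phi^{\mathcal{I}}$ is compatible with $\mathsf{A}^{\mathcal{J}}$ and $\mathsf{A}^{\mathcal{I}}$ is compatible with $\mathsf{A}^{\mathcal{J}}$.
   Context: All Hilbert spaces are finite-dimensional and complex, and all outcome sets are finite. A POVM $\mathsf{A}\in\mathcal{O}(\Omega,\mathcal{H})$ is a map $x\mapsto \mathsf{A}(x)$ from $\Omega$ to positive operators on $\mathcal{H}$ with $\sum_x \mathsf{A}(x)=I$. An instrument $\mathcal{I}\in\mathrm{Ins}(\Omega,\mathcal{H},\mathcal{K})$ is a family $(\mathcal{I}_x)_{x\in\Omega}$ of completely positive trace-nonincreasing linear maps $\mathcal{L}(\mathcal{H})\to\mathcal{L}(\mathcal{K})$ such that $\Phi^{\mathcal{I}}:=\sum_x\mathcal{I}_x$ is trace preserving (induced channel); its induced POVM $\mathsf{A}^{\mathcal{I}}$ is defined by $\mathrm{tr}[\mathsf{A}^{\mathcal{I}}(x)\varrho]=\mathrm{tr}[\mathcal{I}_x(\varrho)]$. Postprocessing: $\mathcal{I}\preceq\mathcal{J}$ if there exist instruments $\mathcal{R}^{(y)}\in\mathrm{Ins}(\Omega,\mathcal{V},\mathcal{K})$, $y\in\Lambda$, with $\mathcal{I}_x=\sum_{y}\mathcal{R}^{(y)}_x\circ\mathcal{J}_y$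 for all $x$. Two instruments $\mathcal{I}\in\mathrm{Ins}(\Omega,\mathcal{H},\mathcal{K})$, $\mathcal{J}\in\mathrm{Ins}(\Lambda,\mathcal{H},\mathcal{V})$ are compatible if there is $\mathcal{G}\in\mathrm{Ins}(\Omega\times\Lambda,\mathcal{H},\mathcal{K}\otimes\mathcal{V})$ with $\sum_{x}\mathrm{tr}_{\mathcal{K}}[\mathcal{G}_{(x,y)}(\varrho)]=\mathcal{J}_y(\varrho)$ for all $y$ and $\sum_y\mathrm{tr}_{\mathcal{V}}[\mathcal{G}_{(x,y)}(\varrho)]=\mathcal{I}_x(\varrho)$ for all $x$, for all states $\varrho$. A POVM $\mathsf{A}\in\mathcal{O}(\Omega,\mathcal{H})$ is identified with the instrument in $\mathrm{Ins}(\Omega,\mathcal{H},\mathbb{C})$ given by $\varrho\mapsto\mathrm{tr}[\mathsf{A}(x)\varrho]$, and a channel with a one-outcome instrument; compatibility involving POVMs or channels is defined through these identifications. *)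

theory Defs
  imports Complex_Main "Jordan_Normal_Form.Matrix"
begin

text \<open>A finite-dimensional complex Hilbert space of dimension d is represented by
  the coordinate space C^d; operators on it are complex d x d matrices.
  The tensor product C^a (x) C^b is C^(a*b) with index (i,j) mapped to i*b+j.\<close>

definition mtrace :: "complex mat \<Rightarrow> complex" where
  "mtrace A = (\<Sum>i<dim_row A. A $$ (i,i))"

definition pos_op :: "nat \<Rightarrow> complex mat \<Rightarrow> bool" where
  "pos_op d A \<longleftrightarrow> A \<in> carrier_mat d d \<and>
     (\<forall>v \<in> carrier_vec d. let z = (\<Sum>i<d. cnj (v $ i) * (A *\<^sub>v v) $ i) in Im z = 0 \<and> Re z \<ge> 0)"

definition state :: "nat \<Rightarrow> complex mat \<Rightarrow> bool" where
  "state d \<rho> \<longleftrightarrow> pos_op d \<rho> \<and> mtrace \<rho> = 1"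

definition lin_map :: "nat \<Rightarrow> nat \<Rightarrow> (complex mat \<Rightarrow> complex mat) \<Rightarrow> bool" where
  "lin_map n m E \<longleftrightarrow>
     (\<forall>X \<in> carrier_mat n n. E X \<in> carrier_mat m m) \<and>
     (\<forall>X \<in> carrier_mat n n. \<forall>Y \<in> carrier_mat n n. E (X + Y) = E X + E Y) \<and>
     (\<forall>X \<in> carrier_mat n n. \<forall>c. E (c \<cdot>\<^sub>m X) = c \<cdot>\<^sub>m E X)"

text \<open>Block (a,b) of a (k*n) x (k*n) matrix, viewed as an operator on C^k (x) C^n.\<close>
definition blk :: "nat \<Rightarrow> complex mat \<Rightarrow> nat \<Rightarrow> nat \<Rightarrow> complex mat" where
  "blk n X a b = mat n n (\<lambda>(p,q). X $$ (a*n+p, b*n+q))"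

text \<open>The ampliation id_k (x) E : L(C^k (x) C^n) -> L(C^k (x) C^m).\<close>
definition ampl :: "nat \<Rightarrow> nat \<Rightarrow> nat \<Rightarrow> (complex mat \<Rightarrow> complex mat) \<Rightarrow> complex mat \<Rightarrow> complex mat" where
  "ampl k n m E X = mat (k*m) (k*m)
     (\<lambda>(i,j). E (blk n X (i div m) (j div m)) $$ (i mod m, j mod m))"

definition completely_positive :: "nat \<Rightarrow> nat \<Rightarrow> (complex mat \<Rightarrow> complex mat) \<Rightarrow> bool" where
  "completely_positive n m E \<longleftrightarrow> lin_map n m E \<and>
     (\<forall>k X. pos_op (k*n) X \<longrightarrow> pos_op (k*m) (ampl k n m E X))"

definition trace_nonincreasing :: "nat \<Rightarrow> (complex mat \<Rightarrow> complex mat) \<Rightarrow> bool" where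
  "trace_nonincreasing n E \<longleftrightarrow> (\<forall>X. pos_op n X \<longrightarrow> Re (mtrace (E X)) \<le> Re (mtrace X))"

definition trace_preserving :: "nat \<Rightarrow> (complex mat \<Rightarrow> complex mat) \<Rightarrow> bool" where
  "trace_preserving n E \<longleftrightarrow> (\<forall>X \<in> carrier_mat n n. mtrace (E X) = mtrace X)"

definition msum :: "nat \<Rightarrow> ('a \<Rightarrow> complex mat) \<Rightarrow> 'a set \<Rightarrow> complex mat" where
  "msum d f S = mat d d (\<lambda>ij. \<Sum>x\<in>S. f x $$ ij)"

definition induced_channel :: "nat \<Rightarrow> ('x::finite \<Rightarrow> complex mat \<Rightarrow> complex mat) \<Rightarrow> complex mat \<Rightarrow> complex mat" where
  "induced_channel m I X = msum m (\<lambda>x. I x X) UNIV"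

definition instrument :: "nat \<Rightarrow> nat \<Rightarrow> ('x::finite \<Rightarrow> complex mat \<Rightarrow> complex mat) \<Rightarrow> bool" where
  "instrument n m I \<longleftrightarrow>
     (\<forall>x. completely_positive n m (I x) \<and> trace_nonincreasing n (I x)) \<and>
     trace_preserving n (induced_channel m I)"

definition induced_povm :: "nat \<Rightarrow> ('x \<Rightarrow> complex mat \<Rightarrow> complex mat) \<Rightarrow> 'x \<Rightarrow> complex mat" where
  "induced_povm n I x = (SOME A. A \<in> carrier_mat n n \<and>
      (\<forall>\<rho> \<in> carrier_mat n n. mtrace (A * \<rho>) = mtrace (I x \<rho>)))"

text \<open>A POVM identified with an instrument with output space C (dimension 1).\<close>
definition povm_ins :: "('x \<Rightarrow> complex mat) \<Rightarrow> 'x \<Rightarrow> complex mat \<Rightarrow> complex mat" where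
  "povm_ins A x \<rho> = mat 1 1 (\<lambda>_. mtrace (A x * \<rho>))"

text \<open>A channel identified with a one-outcome instrument.\<close>
definition chan_ins :: "(complex mat \<Rightarrow> complex mat) \<Rightarrow> unit \<Rightarrow> complex mat \<Rightarrow> complex mat" where
  "chan_ins \<Phi> u = \<Phi>"

definition ptrace1 :: "nat \<Rightarrow> nat \<Rightarrow> complex mat \<Rightarrow> complex mat" where
  "ptrace1 a b X = mat b b (\<lambda>(v,w). \<Sum>k<a. X $$ (k*b+v, k*b+w))"

definition ptrace2 :: "nat \<Rightarrow> nat \<Rightarrow> complex mat \<Rightarrow> complex mat" where
  "ptrace2 a b X = mat a a (\<lambda>(k,l). \<Sum>v<b. X $$ (k*b+v, l*b+v))"

definition compatible ::
  "nat \<Rightarrow> nat \<Rightarrow> nat \<Rightarrow> ('x::finite \<Rightarrow> complex mat \<Rightarrow> complex mat) \<Rightarrow> ('y::finite \<Rightarrow> complex mat \<Rightarrow> complex mat) \<Rightarrow> bool" where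
  "compatible n a b I J \<longleftrightarrow>
     (\<exists>G :: 'x \<times> 'y \<Rightarrow> complex mat \<Rightarrow> complex mat.
        instrument n (a*b) G \<and>
        (\<forall>\<rho>. state n \<rho> \<longrightarrow>
           (\<forall>y. msum b (\<lambda>x. ptrace1 a b (G (x,y) \<rho>)) UNIV = J y \<rho>) \<and>
           (\<forall>x. msum a (\<lambda>y. ptrace2 a b (G (x,y) \<rho>)) UNIV = I x \<rho>)))"

definition postproc ::
  "nat \<Rightarrow> nat \<Rightarrow> nat \<Rightarrow> ('x::finite \<Rightarrow> complex mat \<Rightarrow> complex mat) \<Rightarrow> ('y::finite \<Rightarrow> complex mat \<Rightarrow> complex mat) \<Rightarrow> bool" where
  "postproc n m v I J \<longleftrightarrow>
     (\<exists>R :: 'y \<Rightarrow> 'x \<Rightarrow> complex mat \<Rightarrow> complex mat.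
        (\<forall>y. instrument v m (R y)) \<and>
        (\<forall>x. \<forall>\<rho> \<in> carrier_mat n n. I x \<rho> = msum m (\<lambda>y. R y x (J y \<rho>)) UNIV))"

end

(* Write the postprocessing as I_x = \<Sum>_y R^(y)_x \<circ> J_y. Then G_(x,y) = R^(y)_x \<circ> J_y is a single
   instrument with outcomes (x,y): summing over y gives back I_x, and summing the traces over x
   gives tr J_y(\<rho>) = tr[A^J(y) \<rho>] because every R^(y) is trace preserving, so G is a joint
   instrument for I and A^J. Coarse-graining G over x, or tracing out its output, turns it into
   a joint instrument for \<Phi>^I and A^J, or for A^I and A^J. *)

theory Submission
  imports Defs
begin

lemma mult_add_less_mult:
  fixes k a v b :: nat
  assumes "k < a" "v < b"
  shows "k * b + v < a * b"
proof -
  have "k * b + v < (k + 1) * b" using assms(2) by simp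
  also have "\<dots> \<le> a * b" using assms(1) by (intro mult_right_mono) auto
  finally show ?thesis .
qed

lemma sum_lessThan_mult:
  fixes f :: "nat \<Rightarrow> 'a::comm_monoid_add"
  shows "(\<Sum>t<k * m. f t) = (\<Sum>i<k. \<Sum>q<m. f (i * m + q))"
proof -
  have "(\<Sum>t<k * m. f t) = (\<Sum>i<k. sum f {i * m..<i * m + m})"
    by (rule sum.nat_group[symmetric])
  also have "\<dots> = (\<Sum>i<k. \<Sum>q<m. f (i * m + q))"
    by (simp add: sum.shift_bounds_nat_ivl[of f 0 "i * m" m for i, simplified] add.commute
        atLeast0LessThan)
  finally show ?thesis .
qed

definition quad_form :: "nat \<Rightarrow> complex mat \<Rightarrow> complex vec \<Rightarrow> complex" where
  "quad_form d X v = (\<Sum>i<d. \<Sum>j<d. cnj (v $ i) * X $$ (i, j) * v $ j)"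

lemma sum_cnj_mult_mat_vec:
  assumes "X \<in> carrier_mat d d" "v \<in> carrier_vec d"
  shows "(\<Sum>i<d. cnj (v $ i) * (X *\<^sub>v v) $ i) = quad_form d X v"
  unfolding quad_form_def
  using assms by (auto simp: scalar_prod_def atLeast0LessThan sum_distrib_left mult.assoc
      intro!: sum.cong)

lemma pos_op_iff_quad_form:
  "pos_op d X \<longleftrightarrow>
     X \<in> carrier_mat d d \<and> (\<forall>v \<in> carrier_vec d. Im (quad_form d X v) = 0 \<and> Re (quad_form d X v) \<ge> 0)"
  unfolding pos_op_def Let_def
  by (intro conj_cong refl ball_cong) (simp_all only: sum_cnj_mult_mat_vec)

lemma pos_op_carrier: "pos_op d X \<Longrightarrow> X \<in> carrier_mat d d"
  unfolding pos_op_def by blast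

lemma state_carrier: "state n \<rho> \<Longrightarrow> \<rho> \<in> carrier_mat n n"
  unfolding state_def by (blast intro: pos_op_carrier)

lemma quad_form_unit_vec: "i < d \<Longrightarrow> quad_form d X (unit_vec d i) = X $$ (i, i)"
  unfolding quad_form_def unit_vec_def
  by (simp add: if_distrib[of cnj] if_distrib[where f="\<lambda>z. z * _"]
      if_distrib[where f="\<lambda>z. _ * z"] sum.delta cong: if_cong)

lemma pos_op_trace_nonneg:
  assumes "pos_op d X"
  shows "Re (mtrace X) \<ge> 0"
proof -
  have "Re (X $$ (i, i)) \<ge> 0" if "i < d" for i
    using assms that unit_vec_carrier[of d i] quad_form_unit_vec[OF that, of X]
    unfolding pos_op_iff_quad_form by metis
  then show ?thesis
    using pos_op_carrier[OF assms] unfolding mtrace_def by (auto simp: Re_sum intro!: sum_nonneg)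
qed

lemma msum_carrier [simp]: "msum d f S \<in> carrier_mat d d"
  unfolding msum_def by simp

lemma dim_row_msum [simp]: "dim_row (msum d f S) = d"
  and dim_col_msum [simp]: "dim_col (msum d f S) = d"
  unfolding msum_def by simp_all

lemma index_msum [simp]: "i < d \<Longrightarrow> j < d \<Longrightarrow> msum d f S $$ (i, j) = (\<Sum>x\<in>S. f x $$ (i, j))"
  unfolding msum_def by simp

lemma msum_empty: "msum d f {} = 0\<^sub>m d d"
  by (intro eq_matI) auto

lemma msum_insert:
  assumes "finite S" "a \<notin> S" "f a \<in> carrier_mat d d"
  shows "msum d f (insert a S) = f a + msum d f S"
  using assms by (intro eq_matI) auto

lemma msum_swap: "msum d (\<lambda>y. msum d (\<lambda>x. f x y) A) B = msum d (\<lambda>x. msum d (\<lambda>y. f x y) B) A"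
  by (intro eq_matI) (auto intro: sum.swap)

lemma msum_reindex: "inj_on h A \<Longrightarrow> msum d f (h ` A) = msum d (\<lambda>x. f (h x)) A"
  by (intro eq_matI) (auto simp: sum.reindex)

lemma msum_unit: "f () \<in> carrier_mat d d \<Longrightarrow> msum d f (UNIV :: unit set) = f ()"
  by (intro eq_matI) (auto simp: UNIV_unit)

lemma mtrace_add: "X \<in> carrier_mat d d \<Longrightarrow> Y \<in> carrier_mat d d \<Longrightarrow> mtrace (X + Y) = mtrace X + mtrace Y"
  unfolding mtrace_def by (simp add: sum.distrib)

lemma mtrace_smult: "X \<in> carrier_mat d d \<Longrightarrow> mtrace (c \<cdot>\<^sub>m X) = c * mtrace X"
  unfolding mtrace_def by (simp add: sum_distrib_left)

lemma mtrace_msum: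
  assumes "\<And>s. s \<in> S \<Longrightarrow> f s \<in> carrier_mat d d"
  shows "mtrace (msum d f S) = (\<Sum>s\<in>S. mtrace (f s))"
proof -
  have "mtrace (msum d f S) = (\<Sum>i<d. \<Sum>s\<in>S. f s $$ (i, i))"
    by (simp add: mtrace_def)
  also have "\<dots> = (\<Sum>s\<in>S. \<Sum>i<d. f s $$ (i, i))"
    by (rule sum.swap)
  also have "\<dots> = (\<Sum>s\<in>S. mtrace (f s))"
    using assms by (auto simp: mtrace_def intro!: sum.cong)
  finally show ?thesis .
qed

lemma quad_form_msum: "quad_form d (msum d f S) v = (\<Sum>x\<in>S. quad_form d (f x) v)"
  unfolding quad_form_def by (simp add: sum_distrib_left sum_distrib_right sum.swap[of _ S])

lemma pos_op_msum:
  assumes "\<And>x. x \<in> S \<Longrightarrow> pos_op d (f x)"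
  shows "pos_op d (msum d f S)"
  using assms unfolding pos_op_iff_quad_form quad_form_msum
  by (auto simp: Im_sum Re_sum intro!: sum_nonneg)

lemma ptrace1_msum: "ptrace1 a b (msum (a * b) f S) = msum b (\<lambda>s. ptrace1 a b (f s)) S"
  unfolding ptrace1_def by (intro eq_matI) (auto simp: mult_add_less_mult intro: sum.swap)

lemma ptrace2_msum: "ptrace2 a b (msum (a * b) f S) = msum a (\<lambda>s. ptrace2 a b (f s)) S"
  unfolding ptrace2_def by (intro eq_matI) (auto simp: mult_add_less_mult intro: sum.swap)

definition tr_mat :: "complex mat \<Rightarrow> complex mat" where
  "tr_mat X = mat 1 1 (\<lambda>_. mtrace X)"

lemma mtrace_tr_mat [simp]: "mtrace (tr_mat X) = mtrace X"
  unfolding tr_mat_def mtrace_def by simp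

lemma tr_mat_msum:
  assumes "\<And>s. s \<in> S \<Longrightarrow> f s \<in> carrier_mat d d"
  shows "msum 1 (\<lambda>s. tr_mat (f s)) S = tr_mat (msum d f S)"
  using mtrace_msum[OF assms, symmetric] by (intro eq_matI) (auto simp: tr_mat_def)

lemma ptrace1_carrier [simp]: "ptrace1 a b X \<in> carrier_mat b b"
  unfolding ptrace1_def by simp

lemma tr_mat_eqI: "mtrace X = mtrace Y \<Longrightarrow> tr_mat X = tr_mat Y"
  unfolding tr_mat_def by simp

lemma tr_mat_tr_mat [simp]: "tr_mat (tr_mat X) = tr_mat X"
  by (rule tr_mat_eqI) simp

lemma ptrace1_one: "X \<in> carrier_mat a a \<Longrightarrow> ptrace1 a 1 X = tr_mat X"
  unfolding ptrace1_def tr_mat_def mtrace_def by (intro eq_matI) auto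

lemma ptrace2_one: "X \<in> carrier_mat a a \<Longrightarrow> ptrace2 a 1 X = X"
  unfolding ptrace2_def by (intro eq_matI) auto

section \<open>Completely positive maps\<close>

lemma lin_map_carrier: "lin_map n m E \<Longrightarrow> X \<in> carrier_mat n n \<Longrightarrow> E X \<in> carrier_mat m m"
  unfolding lin_map_def by blast

lemma lin_map_add: "lin_map n m E \<Longrightarrow> X \<in> carrier_mat n n \<Longrightarrow> Y \<in> carrier_mat n n \<Longrightarrow> E (X + Y) = E X + E Y"
  unfolding lin_map_def by blast

lemma lin_map_smult: "lin_map n m E \<Longrightarrow> X \<in> carrier_mat n n \<Longrightarrow> E (c \<cdot>\<^sub>m X) = c \<cdot>\<^sub>m E X"
  unfolding lin_map_def by blast

lemma lin_map_zero:
  assumes "lin_map n m E"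
  shows "E (0\<^sub>m n n) = 0\<^sub>m m m"
proof -
  have "E (0\<^sub>m n n) = E (0 \<cdot>\<^sub>m 0\<^sub>m n n)" by simp
  also have "\<dots> = 0 \<cdot>\<^sub>m E (0\<^sub>m n n)" by (rule lin_map_smult[OF assms zero_carrier_mat])
  also have "\<dots> = 0\<^sub>m m m" using lin_map_carrier[OF assms, of "0\<^sub>m n n"] by (intro eq_matI) auto
  finally show ?thesis .
qed

lemma lin_map_msum_apply:
  assumes "lin_map n m E" "finite S" "\<And>s. s \<in> S \<Longrightarrow> f s \<in> carrier_mat n n"
  shows "E (msum n f S) = msum m (\<lambda>s. E (f s)) S"
  using assms(2,3)
proof (induction S rule: finite_induct)
  case empty
  then show ?case using lin_map_zero[OF assms(1)] by (simp add: msum_empty)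
next
  case (insert a S)
  then have fa: "f a \<in> carrier_mat n n" by simp
  have "E (msum n f (insert a S)) = E (f a) + E (msum n f S)"
    using insert fa by (simp add: msum_insert lin_map_add[OF assms(1)])
  also have "\<dots> = msum m (\<lambda>s. E (f s)) (insert a S)"
    using insert lin_map_carrier[OF assms(1) fa] by (simp add: msum_insert)
  finally show ?case .
qed

lemma lin_map_comp: "lin_map n m E \<Longrightarrow> lin_map m l F \<Longrightarrow> lin_map n l (\<lambda>X. F (E X))"
  unfolding lin_map_def by auto

lemma lin_map_msum:
  assumes "\<And>x. x \<in> S \<Longrightarrow> lin_map n m (E x)"
  shows "lin_map n m (\<lambda>X. msum m (\<lambda>x. E x X) S)"
  unfolding lin_map_def
proof (intro conjI ballI allI)
  fix X Y :: "complex mat" assume XY: "X \<in> carrier_mat n n" "Y \<in> carrier_mat n n"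
  have "E x (X + Y) $$ (i, j) = E x X $$ (i, j) + E x Y $$ (i, j)"
    if "x \<in> S" "i < m" "j < m" for x i j
    using lin_map_carrier[OF assms[OF that(1)] XY(2)] that(2,3)
    by (simp add: lin_map_add[OF assms[OF that(1)] XY])
  then show "msum m (\<lambda>x. E x (X + Y)) S = msum m (\<lambda>x. E x X) S + msum m (\<lambda>x. E x Y) S"
    by (intro eq_matI) (auto simp: sum.distrib[symmetric] intro!: sum.cong)
next
  fix X :: "complex mat" and c assume X: "X \<in> carrier_mat n n"
  have "E x (c \<cdot>\<^sub>m X) $$ (i, j) = c * E x X $$ (i, j)" if "x \<in> S" "i < m" "j < m" for x i j
    using lin_map_carrier[OF assms[OF that(1)] X] that(2,3)
    by (simp add: lin_map_smult[OF assms[OF that(1)] X])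
  then show "msum m (\<lambda>x. E x (c \<cdot>\<^sub>m X)) S = c \<cdot>\<^sub>m msum m (\<lambda>x. E x X) S"
    by (intro eq_matI) (auto simp: sum_distrib_left intro!: sum.cong)
qed simp

lemma completely_positive_lin_map: "completely_positive n m E \<Longrightarrow> lin_map n m E"
  unfolding completely_positive_def by blast

lemma completely_positive_ampl:
  "completely_positive n m E \<Longrightarrow> pos_op (k * n) X \<Longrightarrow> pos_op (k * m) (ampl k n m E X)"
  unfolding completely_positive_def by blast

lemma completely_positiveI:
  assumes "lin_map n m E" "\<And>k X. pos_op (k * n) X \<Longrightarrow> pos_op (k * m) (ampl k n m E X)"
  shows "completely_positive n m E"
  unfolding completely_positive_def using assms by blast

lemma ampl_one:
  assumes "lin_map n m E" "X \<in> carrier_mat n n"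
  shows "ampl 1 n m E X = E X"
proof -
  have "blk n X 0 0 = X" using assms(2) unfolding blk_def by (intro eq_matI) auto
  then show ?thesis using lin_map_carrier[OF assms] unfolding ampl_def by (intro eq_matI) auto
qed

lemma completely_positive_pos:
  assumes "completely_positive n m E" "pos_op n X"
  shows "pos_op m (E X)"
proof -
  have "pos_op (1 * m) (ampl 1 n m E X)"
    using completely_positive_ampl[OF assms(1)] assms(2) by (metis mult_1)
  then show ?thesis
    using ampl_one[OF completely_positive_lin_map[OF assms(1)] pos_op_carrier[OF assms(2)]] by simp
qed

lemma blk_ampl:
  assumes "lin_map n m E" "a < k" "b < k"
  shows "blk m (ampl k n m E X) a b = E (blk n X a b)"
  using lin_map_carrier[OF assms(1), of "blk n X a b"] assms(2,3)
  unfolding blk_def[of m] ampl_def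
  by (intro eq_matI) (auto simp: mult_add_less_mult blk_def)

lemma ampl_comp:
  assumes "lin_map n m E"
  shows "ampl k m l F (ampl k n m E X) = ampl k n l (\<lambda>Y. F (E Y)) X"
proof (rule eq_matI)
  fix i j assume "i < dim_row (ampl k n l (\<lambda>Y. F (E Y)) X)" "j < dim_col (ampl k n l (\<lambda>Y. F (E Y)) X)"
  then have "i < k * l" "j < k * l" unfolding ampl_def by auto
  moreover from this have "i div l < k" "j div l < k" by (simp_all add: less_mult_imp_div_less)
  ultimately show "ampl k m l F (ampl k n m E X) $$ (i, j) = ampl k n l (\<lambda>Y. F (E Y)) X $$ (i, j)"
    using blk_ampl[OF assms] unfolding ampl_def[of k m l] ampl_def[of k n l] by simp
qed (simp_all add: ampl_def)

lemma completely_positive_comp: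
  assumes "completely_positive n m E" "completely_positive m l F"
  shows "completely_positive n l (\<lambda>X. F (E X))"
proof (rule completely_positiveI)
  show "lin_map n l (\<lambda>X. F (E X))"
    using assms by (blast intro: lin_map_comp completely_positive_lin_map)
  fix k X assume "pos_op (k * n) X"
  then show "pos_op (k * l) (ampl k n l (\<lambda>X. F (E X)) X)"
    using assms completely_positive_ampl ampl_comp[OF completely_positive_lin_map[OF assms(1)]]
    by metis
qed

lemma ampl_msum: "ampl k n m (\<lambda>X. msum m (\<lambda>x. E x X) S) X = msum (k * m) (\<lambda>x. ampl k n m (E x) X) S"
proof (rule eq_matI)
  fix i j assume "i < dim_row (msum (k * m) (\<lambda>x. ampl k n m (E x) X) S)"
    "j < dim_col (msum (k * m) (\<lambda>x. ampl k n m (E x) X) S)"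
  then have ij: "i < k * m" "j < k * m" by simp_all
  then have "i mod m < m" "j mod m < m" by (metis mod_less_divisor mult_0_right not_gr0 not_less0)+
  with ij show "ampl k n m (\<lambda>X. msum m (\<lambda>x. E x X) S) X $$ (i, j) =
      msum (k * m) (\<lambda>x. ampl k n m (E x) X) S $$ (i, j)"
    unfolding ampl_def by simp
qed (simp_all add: ampl_def)

lemma completely_positive_msum:
  assumes "\<And>x. x \<in> S \<Longrightarrow> completely_positive n m (E x)"
  shows "completely_positive n m (\<lambda>X. msum m (\<lambda>x. E x X) S)"
  using assms
  by (auto intro!: completely_positiveI lin_map_msum pos_op_msum
      simp: completely_positive_lin_map completely_positive_ampl ampl_msum)

(* (1 \<otimes> \<langle>p|) X (1 \<otimes> |p\<rangle>) for X on C^k \<otimes> C^m; the ampliation of the trace is the sum of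
   these compressions over p, which makes the trace completely positive. *)
definition compression :: "nat \<Rightarrow> nat \<Rightarrow> nat \<Rightarrow> complex mat \<Rightarrow> complex mat" where
  "compression k m p X = mat k k (\<lambda>(i, j). X $$ (i * m + p, j * m + p))"

lemma quad_form_compression:
  assumes v: "v \<in> carrier_vec k" and p: "p < m"
  shows "quad_form k (compression k m p X) v =
    quad_form (k * m) X (vec (k * m) (\<lambda>t. if t mod m = p then v $ (t div m) else 0))"
    (is "_ = quad_form _ _ ?w")
proof -
  have sum_if_const: "(\<Sum>i\<in>A. if P then f i else 0) = (if P then sum f A else 0)"
    for A P and f :: "nat \<Rightarrow> complex"
    by simp
  have w: "?w $ (i * m + q) = (if q = p then v $ i else 0)" if "i < k" "q < m" for i q
    using that by (simp add: mult_add_less_mult)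
  have "quad_form (k * m) X ?w =
      (\<Sum>i<k. \<Sum>q<m. \<Sum>j<k. \<Sum>r<m. cnj (?w $ (i * m + q)) * X $$ (i * m + q, j * m + r) * ?w $ (j * m + r))"
    unfolding quad_form_def sum_lessThan_mult ..
  also have "\<dots> = (\<Sum>i<k. \<Sum>q<m. \<Sum>j<k. \<Sum>r<m.
      (if q = p then cnj (v $ i) else 0) * X $$ (i * m + q, j * m + r) * (if r = p then v $ j else 0))"
    by (intro sum.cong refl) (simp add: w)
  also have "\<dots> = (\<Sum>i<k. \<Sum>j<k. cnj (v $ i) * X $$ (i * m + p, j * m + p) * v $ j)"
    using p by (simp add: if_distrib[where f="\<lambda>z. z * _"] if_distrib[where f="\<lambda>z. _ * z"]
        sum.delta sum.swap[of _ "{..<m}"] sum_if_const cong: if_cong)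
  also have "\<dots> = quad_form k (compression k m p X) v"
    unfolding quad_form_def compression_def by simp
  finally show ?thesis ..
qed

lemma pos_op_compression:
  assumes "pos_op (k * m) X" "p < m"
  shows "pos_op k (compression k m p X)"
  using assms quad_form_compression[OF _ assms(2)]
  unfolding pos_op_iff_quad_form by (simp add: compression_def)

lemma lin_map_tr_mat: "lin_map m 1 tr_mat"
  unfolding lin_map_def tr_mat_def by (auto intro!: eq_matI simp: mtrace_add mtrace_smult)

lemma trace_preserving_tr_mat: "trace_preserving m tr_mat"
  unfolding trace_preserving_def by simp

lemma ampl_tr_mat: "ampl k m 1 tr_mat X = msum k (\<lambda>p. compression k m p X) {..<m}"
  unfolding ampl_def tr_mat_def mtrace_def blk_def compression_def by (intro eq_matI) auto

lemma completely_positive_tr_mat: "completely_positive m 1 tr_mat"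
proof (rule completely_positiveI)
  fix k X assume "pos_op (k * m) X"
  then show "pos_op (k * 1) (ampl k m 1 tr_mat X)"
    unfolding ampl_tr_mat mult_1_right by (auto intro!: pos_op_msum pos_op_compression)
qed (rule lin_map_tr_mat)

section \<open>Induced POVMs\<close>

definition mat_unit :: "nat \<Rightarrow> nat \<Rightarrow> nat \<Rightarrow> complex mat" where
  "mat_unit n i j = mat n n (\<lambda>(a, b). if a = i \<and> b = j then 1 else 0)"

lemma mat_unit_carrier [simp]: "mat_unit n i j \<in> carrier_mat n n"
  unfolding mat_unit_def by simp

lemma mat_eq_msum_mat_unit:
  assumes "X \<in> carrier_mat n n"
  shows "X = msum n (\<lambda>(i, j). X $$ (i, j) \<cdot>\<^sub>m mat_unit n i j) ({..<n} \<times> {..<n})"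
proof (rule eq_matI)
  fix a b assume ab: "a < dim_row (msum n (\<lambda>(i, j). X $$ (i, j) \<cdot>\<^sub>m mat_unit n i j) ({..<n} \<times> {..<n}))"
    "b < dim_col (msum n (\<lambda>(i, j). X $$ (i, j) \<cdot>\<^sub>m mat_unit n i j) ({..<n} \<times> {..<n}))"
  then have "msum n (\<lambda>(i, j). X $$ (i, j) \<cdot>\<^sub>m mat_unit n i j) ({..<n} \<times> {..<n}) $$ (a, b) =
      (\<Sum>(i, j)\<in>{..<n} \<times> {..<n}. (X $$ (i, j) \<cdot>\<^sub>m mat_unit n i j) $$ (a, b))"
    by (simp add: case_prod_beta')
  also have "\<dots> = (\<Sum>z\<in>{..<n} \<times> {..<n}. if z = (a, b) then X $$ z else 0)"
    using ab by (intro sum.cong refl) (auto simp: mat_unit_def split: if_splits)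
  also have "\<dots> = X $$ (a, b)"
    using ab by simp
  finally show "X $$ (a, b) = msum n (\<lambda>(i, j). X $$ (i, j) \<cdot>\<^sub>m mat_unit n i j) ({..<n} \<times> {..<n}) $$ (a, b)"
    by simp
qed (use assms in simp_all)

lemma mtrace_lin_map_representation:
  assumes "lin_map n m E"
  shows "\<exists>A \<in> carrier_mat n n. \<forall>\<rho> \<in> carrier_mat n n. mtrace (A * \<rho>) = mtrace (E \<rho>)"
proof (intro bexI ballI)
  define A where "A = mat n n (\<lambda>(a, b). mtrace (E (mat_unit n b a)))"
  show "A \<in> carrier_mat n n" unfolding A_def by simp
  fix \<rho> :: "complex mat" assume \<rho>: "\<rho> \<in> carrier_mat n n"
  have tr_unit: "mtrace (E (c \<cdot>\<^sub>m mat_unit n i j)) = c * mtrace (E (mat_unit n i j))" for c i j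
    using lin_map_carrier[OF assms, of "mat_unit n i j"]
    by (simp add: lin_map_smult[OF assms] mtrace_smult)
  have "mtrace (E \<rho>) = (\<Sum>(i, j)\<in>{..<n} \<times> {..<n}. mtrace (E (\<rho> $$ (i, j) \<cdot>\<^sub>m mat_unit n i j)))"
    by (subst mat_eq_msum_mat_unit[OF \<rho>], subst lin_map_msum_apply[OF assms])
      (auto simp: case_prod_beta' mtrace_msum lin_map_carrier[OF assms])
  also have "\<dots> = (\<Sum>(i, j)\<in>{..<n} \<times> {..<n}. \<rho> $$ (i, j) * mtrace (E (mat_unit n i j)))"
    by (simp only: tr_unit)
  also have "\<dots> = (\<Sum>j<n. \<Sum>i<n. A $$ (j, i) * \<rho> $$ (i, j))"
    unfolding A_def sum.cartesian_product[symmetric] by (subst sum.swap) (simp add: mult.commute)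
  also have "\<dots> = mtrace (A * \<rho>)"
    using \<rho> unfolding A_def mtrace_def by (simp add: scalar_prod_def atLeast0LessThan)
  finally show "mtrace (A * \<rho>) = mtrace (E \<rho>)" ..
qed

lemma mtrace_induced_povm:
  assumes "lin_map n m (I x)" "\<rho> \<in> carrier_mat n n"
  shows "mtrace (induced_povm n I x * \<rho>) = mtrace (I x \<rho>)"
  using someI_ex[OF mtrace_lin_map_representation[OF assms(1), unfolded Bex_def]] assms(2)
  unfolding induced_povm_def by blast

lemma povm_ins_induced_povm:
  assumes "lin_map n m (I x)" "\<rho> \<in> carrier_mat n n"
  shows "povm_ins (induced_povm n I) x \<rho> = tr_mat (I x \<rho>)"
  unfolding povm_ins_def tr_mat_def mtrace_induced_povm[where I = I and x = x, OF assms] ..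

lemma sum_UNIV_prod: "(\<Sum>z\<in>UNIV. g z) = (\<Sum>x\<in>UNIV. \<Sum>y\<in>UNIV. g (x, y))"
  for g :: "'a::finite \<times> 'b::finite \<Rightarrow> 'c::comm_monoid_add"
  by (simp add: sum.cartesian_product UNIV_Times_UNIV[symmetric] del: UNIV_Times_UNIV)

lemma instrument_cp: "instrument n m I \<Longrightarrow> completely_positive n m (I x)"
  unfolding instrument_def by blast

lemma instrument_lin_map: "instrument n m I \<Longrightarrow> lin_map n m (I x)"
  using instrument_cp completely_positive_lin_map by blast

lemma instrument_carrier: "instrument n m I \<Longrightarrow> X \<in> carrier_mat n n \<Longrightarrow> I x X \<in> carrier_mat m m"
  using instrument_lin_map lin_map_carrier by blast

lemma instrument_trace_le:
  "instrument n m I \<Longrightarrow> pos_op n X \<Longrightarrow> Re (mtrace (I x X)) \<le> Re (mtrace X)"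
  unfolding instrument_def trace_nonincreasing_def by blast

lemma instrument_trace_sum:
  assumes "instrument n m I" "X \<in> carrier_mat n n"
  shows "(\<Sum>x\<in>UNIV. mtrace (I x X)) = mtrace X"
  using assms instrument_carrier[OF assms]
  unfolding instrument_def trace_preserving_def induced_channel_def by (metis mtrace_msum)

lemma instrumentI:
  assumes "\<And>x. completely_positive n m (I x)"
    and "\<And>x X. pos_op n X \<Longrightarrow> Re (mtrace (I x X)) \<le> Re (mtrace X)"
    and "\<And>X. X \<in> carrier_mat n n \<Longrightarrow> (\<Sum>x\<in>UNIV. mtrace (I x X)) = mtrace X"
  shows "instrument n m I"
  using assms lin_map_carrier[OF completely_positive_lin_map[OF assms(1)]]
  unfolding instrument_def trace_nonincreasing_def trace_preserving_def induced_channel_def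
  by (simp add: mtrace_msum)

lemma msum_tr_mat_instrument:
  assumes "instrument n m I" "X \<in> carrier_mat n n"
  shows "msum 1 (\<lambda>x. tr_mat (I x X)) UNIV = tr_mat X"
proof -
  have "msum 1 (\<lambda>x. tr_mat (I x X)) UNIV = tr_mat (msum m (\<lambda>x. I x X) UNIV)"
    by (rule tr_mat_msum) (rule instrument_carrier[OF assms])
  also have "\<dots> = tr_mat X"
    using instrument_trace_sum[OF assms]
    by (intro tr_mat_eqI) (simp add: mtrace_msum instrument_carrier[OF assms])
  finally show ?thesis .
qed

lemma instrument_seq:
  fixes R :: "'y::finite \<Rightarrow> 'x::finite \<Rightarrow> complex mat \<Rightarrow> complex mat"
  assumes R: "\<And>y. instrument v m (R y)" and J: "instrument n v J"
  shows "instrument n m (\<lambda>(x, y) \<rho>. R y x (J y \<rho>))"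
proof (rule instrumentI)
  fix z :: "'x \<times> 'y"
  show "completely_positive n m ((\<lambda>(x, y) \<rho>. R y x (J y \<rho>)) z)"
    using completely_positive_comp[OF instrument_cp[OF J] instrument_cp[OF R]]
    by (simp add: case_prod_beta')
  fix X assume X: "pos_op n X"
  obtain x y where z: "z = (x, y)" by (cases z)
  have "Re (mtrace (R y x (J y X))) \<le> Re (mtrace (J y X))"
    by (rule instrument_trace_le[OF R completely_positive_pos[OF instrument_cp[OF J] X]])
  also have "\<dots> \<le> Re (mtrace X)" by (rule instrument_trace_le[OF J X])
  finally show "Re (mtrace ((\<lambda>(x, y) \<rho>. R y x (J y \<rho>)) z X)) \<le> Re (mtrace X)"
    by (simp add: z)
next
  fix X :: "complex mat" assume X: "X \<in> carrier_mat n n"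
  have "(\<Sum>z\<in>UNIV. mtrace ((\<lambda>(x, y) \<rho>. R y x (J y \<rho>)) z X)) =
      (\<Sum>y\<in>UNIV. \<Sum>x\<in>UNIV. mtrace (R y x (J y X)))"
    by (simp add: sum_UNIV_prod sum.swap[of _ "UNIV :: 'x set"])
  also have "\<dots> = (\<Sum>y\<in>UNIV. mtrace (J y X))"
    using instrument_trace_sum[OF R instrument_carrier[OF J X]] by simp
  also have "\<dots> = mtrace X" by (rule instrument_trace_sum[OF J X])
  finally show "(\<Sum>z\<in>UNIV. mtrace ((\<lambda>(x, y) \<rho>. R y x (J y \<rho>)) z X)) = mtrace X" .
qed

lemma instrument_coarse_grain:
  fixes G :: "'a::finite \<Rightarrow> complex mat \<Rightarrow> complex mat" and f :: "'a \<Rightarrow> 'b::finite"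
  assumes G: "instrument n m G"
  shows "instrument n m (\<lambda>w X. msum m (\<lambda>z. G z X) {z. f z = w})"
proof (rule instrumentI)
  fix w
  show "completely_positive n m (\<lambda>X. msum m (\<lambda>z. G z X) {z. f z = w})"
    by (rule completely_positive_msum[OF instrument_cp[OF G]])
  fix X assume X: "pos_op n X"
  have "Re (mtrace (msum m (\<lambda>z. G z X) {z. f z = w})) = (\<Sum>z | f z = w. Re (mtrace (G z X)))"
    using instrument_carrier[OF G pos_op_carrier[OF X]] by (simp add: mtrace_msum Re_sum)
  also have "\<dots> \<le> (\<Sum>z\<in>UNIV. Re (mtrace (G z X)))"
    using pos_op_trace_nonneg[OF completely_positive_pos[OF instrument_cp[OF G] X]]
    by (intro sum_mono2) auto
  also have "\<dots> = Re (mtrace X)"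
    using instrument_trace_sum[OF G pos_op_carrier[OF X]] by (simp add: Re_sum[symmetric])
  finally show "Re (mtrace (msum m (\<lambda>z. G z X) {z. f z = w})) \<le> Re (mtrace X)" .
next
  fix X :: "complex mat" assume X: "X \<in> carrier_mat n n"
  have "(\<Sum>w\<in>UNIV. mtrace (msum m (\<lambda>z. G z X) {z. f z = w})) =
      (\<Sum>w\<in>UNIV. \<Sum>z | z \<in> UNIV \<and> f z = w. mtrace (G z X))"
    using instrument_carrier[OF G X] by (simp add: mtrace_msum)
  also have "\<dots> = (\<Sum>z\<in>UNIV. mtrace (G z X))"
    by (rule sum.group) auto
  also have "\<dots> = mtrace X" by (rule instrument_trace_sum[OF G X])
  finally show "(\<Sum>w\<in>UNIV. mtrace (msum m (\<lambda>z. G z X) {z. f z = w})) = mtrace X" .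
qed

lemma instrument_comp_channel:
  assumes G: "instrument n m G" and "completely_positive m l \<Phi>" "trace_preserving m \<Phi>"
  shows "instrument n l (\<lambda>z X. \<Phi> (G z X))"
proof (rule instrumentI)
  have tr: "mtrace (\<Phi> (G z X)) = mtrace (G z X)" if "X \<in> carrier_mat n n" for z X
    using assms(3) instrument_carrier[OF G that] unfolding trace_preserving_def by blast
  show "completely_positive n l (\<lambda>X. \<Phi> (G z X))" for z
    by (rule completely_positive_comp[OF instrument_cp[OF G] assms(2)])
  show "Re (mtrace (\<Phi> (G z X))) \<le> Re (mtrace X)" if "pos_op n X" for z X
    using instrument_trace_le[OF G that] tr[OF pos_op_carrier[OF that]] by simp
  show "(\<Sum>z\<in>UNIV. mtrace (\<Phi> (G z X))) = mtrace X" if "X \<in> carrier_mat n n" for X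
    using instrument_trace_sum[OF G that] tr[OF that] by simp
qed

section \<open>Compatibility\<close>

lemma compatible_with_povm_iff:
  fixes I :: "'x::finite \<Rightarrow> complex mat \<Rightarrow> complex mat" and B :: "'y::finite \<Rightarrow> complex mat \<Rightarrow> complex mat"
  shows "compatible n a 1 I B \<longleftrightarrow>
    (\<exists>G :: 'x \<times> 'y \<Rightarrow> complex mat \<Rightarrow> complex mat. instrument n a G \<and>
      (\<forall>\<rho>. state n \<rho> \<longrightarrow>
        (\<forall>y. msum 1 (\<lambda>x. tr_mat (G (x, y) \<rho>)) UNIV = B y \<rho>) \<and>
        (\<forall>x. msum a (\<lambda>y. G (x, y) \<rho>) UNIV = I x \<rho>)))"
proof -
  have "ptrace1 a 1 (G z \<rho>) = tr_mat (G z \<rho>)" "ptrace2 a 1 (G z \<rho>) = G z \<rho>"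
    if "instrument n a G" "state n \<rho>" for G :: "'x \<times> 'y \<Rightarrow> complex mat \<Rightarrow> complex mat" and z \<rho>
  proof -
    have "G z \<rho> \<in> carrier_mat a a"
      using that by (blast intro: instrument_carrier state_carrier)
    then show "ptrace1 a 1 (G z \<rho>) = tr_mat (G z \<rho>)" "ptrace2 a 1 (G z \<rho>) = G z \<rho>"
      by (rule ptrace1_one, rule ptrace2_one)
  qed
  then show ?thesis
    unfolding compatible_def mult_1_right by auto
qed

lemma compatible_induced_channel:
  fixes I :: "'x::finite \<Rightarrow> complex mat \<Rightarrow> complex mat" and B :: "'y::finite \<Rightarrow> complex mat \<Rightarrow> complex mat"
  assumes "compatible n a b I B"
  shows "compatible n a b (chan_ins (induced_channel a I)) B"
proof -
  obtain G :: "'x \<times> 'y \<Rightarrow> complex mat \<Rightarrow> complex mat" where G: "instrument n (a * b) G"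
    and marg_B: "\<And>\<rho> y. state n \<rho> \<Longrightarrow> msum b (\<lambda>x. ptrace1 a b (G (x, y) \<rho>)) UNIV = B y \<rho>"
    and marg_I: "\<And>\<rho> x. state n \<rho> \<Longrightarrow> msum a (\<lambda>y. ptrace2 a b (G (x, y) \<rho>)) UNIV = I x \<rho>"
    using assms unfolding compatible_def by blast
  define f :: "'x \<times> 'y \<Rightarrow> unit \<times> 'y" where "f = (\<lambda>(x, y). ((), y))"
  define G' where "G' = (\<lambda>w X. msum (a * b) (\<lambda>z. G z X) {z. f z = w})"
  have G': "G' (u, y) X = msum (a * b) (\<lambda>x. G (x, y) X) UNIV" for u y X
  proof -
    have "{z. f z = (u, y)} = (\<lambda>x. (x, y)) ` UNIV" unfolding f_def by auto
    then show ?thesis unfolding G'_def by (simp add: msum_reindex inj_on_def)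
  qed
  show ?thesis unfolding compatible_def
  proof (intro exI conjI allI impI)
    show "instrument n (a * b) G'" unfolding G'_def by (rule instrument_coarse_grain[OF G])
  next
    fix \<rho> y assume \<rho>: "state n \<rho>"
    have "msum b (\<lambda>u. ptrace1 a b (G' (u, y) \<rho>)) UNIV = ptrace1 a b (G' ((), y) \<rho>)"
      by (rule msum_unit) simp
    also have "\<dots> = B y \<rho>" by (simp add: G' ptrace1_msum marg_B[OF \<rho>])
    finally show "msum b (\<lambda>u. ptrace1 a b (G' (u, y) \<rho>)) UNIV = B y \<rho>" .
  next
    fix \<rho> u assume \<rho>: "state n \<rho>"
    have "msum a (\<lambda>y. ptrace2 a b (G' (u, y) \<rho>)) UNIV =
        msum a (\<lambda>y. msum a (\<lambda>x. ptrace2 a b (G (x, y) \<rho>)) UNIV) UNIV"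
      by (simp add: G' ptrace2_msum)
    also have "\<dots> = msum a (\<lambda>x. I x \<rho>) UNIV"
      by (simp add: msum_swap[where f = "\<lambda>x y. ptrace2 a b (G (x, y) \<rho>)"] marg_I[OF \<rho>])
    finally show "msum a (\<lambda>y. ptrace2 a b (G' (u, y) \<rho>)) UNIV = chan_ins (induced_channel a I) u \<rho>"
      by (simp add: chan_ins_def induced_channel_def)
  qed
qed

lemma compatible_induced_povm:
  fixes I :: "'x::finite \<Rightarrow> complex mat \<Rightarrow> complex mat" and B :: "'y::finite \<Rightarrow> complex mat \<Rightarrow> complex mat"
  assumes I: "instrument n a I" and "compatible n a 1 I B"
  shows "compatible n 1 1 (povm_ins (induced_povm n I)) B"
proof -
  obtain G :: "'x \<times> 'y \<Rightarrow> complex mat \<Rightarrow> complex mat" where G: "instrument n a G"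
    and marg_B: "\<And>\<rho> y. state n \<rho> \<Longrightarrow> msum 1 (\<lambda>x. tr_mat (G (x, y) \<rho>)) UNIV = B y \<rho>"
    and marg_I: "\<And>\<rho> x. state n \<rho> \<Longrightarrow> msum a (\<lambda>y. G (x, y) \<rho>) UNIV = I x \<rho>"
    using assms(2) unfolding compatible_with_povm_iff by blast
  show ?thesis unfolding compatible_with_povm_iff
  proof (intro exI conjI allI impI)
    show "instrument n 1 (\<lambda>z X. tr_mat (G z X))"
      by (rule instrument_comp_channel[OF G completely_positive_tr_mat trace_preserving_tr_mat])
  next
    fix \<rho> y assume "state n \<rho>"
    then show "msum 1 (\<lambda>x. tr_mat (tr_mat (G (x, y) \<rho>))) UNIV = B y \<rho>"
      using marg_B by simp
  next
    fix \<rho> x assume \<rho>: "state n \<rho>"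
    then have \<rho>_carrier: "\<rho> \<in> carrier_mat n n" by (rule state_carrier)
    have "msum 1 (\<lambda>y. tr_mat (G (x, y) \<rho>)) UNIV = tr_mat (msum a (\<lambda>y. G (x, y) \<rho>) UNIV)"
      by (rule tr_mat_msum) (rule instrument_carrier[OF G \<rho>_carrier])
    also have "\<dots> = tr_mat (I x \<rho>)" by (simp add: marg_I[OF \<rho>])
    also have "\<dots> = povm_ins (induced_povm n I) x \<rho>"
      by (rule povm_ins_induced_povm[symmetric, OF instrument_lin_map[OF I] \<rho>_carrier])
    finally show "msum 1 (\<lambda>y. tr_mat (G (x, y) \<rho>)) UNIV = povm_ins (induced_povm n I) x \<rho>" .
  qed
qed

lemma postproc_compatible_induced_povm:
  fixes I :: "'x::finite \<Rightarrow> complex mat \<Rightarrow> complex mat" and J :: "'y::finite \<Rightarrow> complex mat \<Rightarrow> complex mat"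
  assumes J: "instrument n v J" and "postproc n m v I J"
  shows "compatible n m 1 I (povm_ins (induced_povm n J))"
proof -
  obtain R :: "'y \<Rightarrow> 'x \<Rightarrow> complex mat \<Rightarrow> complex mat" where R: "\<And>y. instrument v m (R y)"
    and I: "\<And>x \<rho>. \<rho> \<in> carrier_mat n n \<Longrightarrow> I x \<rho> = msum m (\<lambda>y. R y x (J y \<rho>)) UNIV"
    using assms(2) unfolding postproc_def by blast
  show ?thesis unfolding compatible_with_povm_iff
  proof (intro exI conjI allI impI)
    show "instrument n m (\<lambda>(x, y) \<rho>. R y x (J y \<rho>))" by (rule instrument_seq[OF R J])
  next
    fix \<rho> y assume "state n \<rho>"
    then have \<rho>: "\<rho> \<in> carrier_mat n n" by (rule state_carrier)
    show "msum 1 (\<lambda>x. tr_mat ((\<lambda>(x, y) \<rho>. R y x (J y \<rho>)) (x, y) \<rho>)) UNIV = povm_ins (induced_povm n J) y \<rho>"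
      using msum_tr_mat_instrument[OF R instrument_carrier[OF J \<rho>]]
      by (simp add: povm_ins_induced_povm[OF instrument_lin_map[OF J] \<rho>])
  next
    fix \<rho> x assume "state n \<rho>"
    then have \<rho>: "\<rho> \<in> carrier_mat n n" by (rule state_carrier)
    show "msum m (\<lambda>y. (\<lambda>(x, y) \<rho>. R y x (J y \<rho>)) (x, y) \<rho>) UNIV = I x \<rho>"
      by (simp add: I[OF \<rho>])
  qed
qed

theorem proposition5:
  fixes dH dK dV :: nat
    and I :: "'x::finite \<Rightarrow> complex mat \<Rightarrow> complex mat"
    and J :: "'y::finite \<Rightarrow> complex mat \<Rightarrow> complex mat"
  assumes "instrument dH dK I"
    and "instrument dH dV J"
    and "postproc dH dK dV I J"
  shows "compatible dH dK 1 I (povm_ins (induced_povm dH J)) \<and>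
    compatible dH dK 1 (chan_ins (induced_channel dK I)) (povm_ins (induced_povm dH J)) \<and>
    compatible dH 1 1 (povm_ins (induced_povm dH I)) (povm_ins (induced_povm dH J))"
proof -
  have "compatible dH dK 1 I (povm_ins (induced_povm dH J))"
    by (rule postproc_compatible_induced_povm[OF assms(2,3)])
  then show ?thesis
    using compatible_induced_channel compatible_induced_povm[OF assms(1)] by blast
qed

end
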